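(* Consider the asynchronous stochastic saddle point iteration described in the context, run with a constant step size $\epsilon>0$ and regularization parameter $\delta>0$, and suppose Assumptions (A1)–(A6) of the context hold. Then for every iteration index $t$, every $\mathbf{x}\in\mathcal{X}^N$ and every $\boldsymbol{\lambda}\in\mathbb{R}^M_{+}$, the following holds (for every realization of the data): \[ \hat{\mathcal{L}}_{[\mathbf{t}]}(\mathbf{x}_{[\mathbf{t}]},\boldsymbol{\lambda})-\hat{\mathcal{L}}_{[\mathbf{t}]}(\mathbf{x},\boldsymbol{\lambda}_t) \le \frac{1}{2\epsilon}\Big(\|\mathbf{x}_t-\mathbf{x}\|^2-\|\mathbf{x}_{t+1}-\mathbf{x}\|^2+\|\boldsymbol{\lambda}_t-\boldsymbol{\lambda}\|^2-\|\boldsymbol{\lambda}_{t+1}-\boldsymbol{\lambda}\|^2\Big) \] \[ \qquad+\frac{\epsilon}{2}\Big(\|\nabla_{\boldsymbol{\lambda}}\hat{\mathcal{L}}_{[\mathbf{t}]}(\mathbf{x}_{[\mathbf{t}]},\boldsymbol{\lambda}_t)\|^2+\|\nabla_{\mathbf{x}}\hat{\mathcal{L}}_{[\mathbf{t}]}(\mathbf{x}_{[\mathbf{t}]},\boldsymbol{\lambda}_t)\|^2\Big) +\big\langle \nabla_{\mathbf{x}}\hat{\mathcal{L}}_{[\mathbf{t}]}(\mathbf{x}_{[\mathbf{t}]},\boldsymbol{\lambda}_t),\,\mathbf{x}_{[\mathbf{t}]}-\mathbf{x}_t\big\rangle . \]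
   Context: Network: $\mathcal{G}=(\mathcal{V},\mathcal{E})$ is a directed graph with node set $\mathcal{V}=\{1,\dots,N\}$ and $|\mathcal{E}|=M$ edges; $n_i=\{j:(i,j)\in\mathcal{E}\}$ is the neighborhood of $i$. $\mathcal{X}\subset\mathbb{R}^p$ is a nonempty compact convex set. For each node $i$, $\boldsymbol{\theta}^i$ is a random vector in $\Theta_i\subset\mathbb{R}^q$, and $f^i:\mathcal{X}\times\Theta_i\to\mathbb{R}$ is convex and differentiable in its first argument for every fixed value of the second. For each $(i,j)\in\mathcal{E}$, $h^{ij}:\mathcal{X}\times\mathcal{X}\times\Theta_i\times\Theta_j\to\mathbb{R}$ is jointly convex and differentiable in its first two arguments for every fixed value of the last two, and $\gamma_{ij}\ge 0$. For $\mathbf{x}=(\mathbf{x}^1,\dots,\mathbf{x}^N)\in\mathcal{X}^N$ let $F(\mathbf{x})=\sum_{i=1}^N\mathbb{E}[f^i(\mathbf{x}^i,\boldsymbol{\theta}^i)]$. The underlying problem is $\min_{\mathbf{x}\in\mathcal{X}^N}F(\mathbf{x})$ subject to $\mathbb{E}[h^{ij}(\mathbf{x}^i,\mathbf{x}^j,\boldsymbol{\theta}^i,\boldsymbol{\theta}^j)]\le\gamma_{ij}$ for all $(i,j)\in\mathcal{E}$. Data and delays: at each time $t=1,2,\dots$ node $i$ observes a realization $\boldsymbol{\theta}^i_t$ (i.i.d. copies of $\boldsymbol{\theta}^i$). Each node $i$ has integer delays $\tau_i(t)\ge 0$ with $t-\tau_i(t)\ge 1$ and $\tau_i(t)\le\tau_i(t-1)+1$;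 write $[t]_i:=t-\tau_i(t)$ and $\mathbf{x}_{[\mathbf{t}]}:=(\mathbf{x}^1_{[t]_1},\dots,\mathbf{x}^N_{[t]_N})$. Delayed stochastic augmented Lagrangian: for $\mathbf{x}\in\mathcal{X}^N$ and $\boldsymbol{\lambda}=(\lambda^{ij})_{(i,j)\in\mathcal{E}}\in\mathbb{R}^M$, \[\hat{\mathcal{L}}_{[\mathbf{t}]}(\mathbf{x},\boldsymbol{\lambda})=\sum_{i=1}^N\Big[f^i(\mathbf{x}^i,\boldsymbol{\theta}^i_{[t]_i})+\sum_{j\in n_i}\Big(\lambda^{ij}\big(h^{ij}(\mathbf{x}^i,\mathbf{x}^j,\boldsymbol{\theta}^i_{[t]_i},\boldsymbol{\theta}^j_{[t]_j})-\gamma_{ij}\big)-\tfrac{\delta\epsilon}{2}(\lambda^{ij})^2\Big)\Big],\] and $\nabla_{\mathbf{x}},\nabla_{\boldsymbol{\lambda}}$ denote its partial gradients. Algorithm: start from $\mathbf{x}_1\in\mathcal{X}^N$, $\boldsymbol{\lambda}_1=\mathbf{0}$, and iterate $\mathbf{x}_{t+1}=\mathcal{P}_{\mathcal{X}^N}\big[\mathbf{x}_t-\epsilon\nabla_{\mathbf{x}}\hat{\mathcal{L}}_{[\mathbf{t}]}(\mathbf{x}_{[\mathbf{t}]},\boldsymbol{\lambda}_t)\big]$ and $\boldsymbol{\lambda}_{t+1}=\big[\boldsymbol{\lambda}_t+\epsilon\nabla_{\boldsymbol{\lambda}}\hat{\mathcal{L}}_{[\mathbf{t}]}(\mathbf{x}_{[\mathbf{t}]},\boldsymbol{\lambda}_t)\big]_+$,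 i.e. $\lambda^{ij}_{t+1}=\big[(1-\epsilon^2\delta)\lambda^{ij}_t+\epsilon\big(h^{ij}(\mathbf{x}^i_{[t]_i},\mathbf{x}^j_{[t]_j},\boldsymbol{\theta}^i_{[t]_i},\boldsymbol{\theta}^j_{[t]_j})-\gamma_{ij}\big)\big]_+$. Here $\mathcal{P}_{\mathcal{X}^N}$ is the Euclidean projection onto $\mathcal{X}^N$ and $[\cdot]_+$ is componentwise projection onto the nonnegative orthant. Assumptions: (A1) $\mathcal{G}$ is symmetric ($(i,j)\in\mathcal{E}\iff(j,i)\in\mathcal{E}$) and connected with diameter $D$. (A2) The set of primal-dual optimal pairs of the constrained problem intersects $\mathcal{X}^N\times\mathbb{R}^M_+$. (A3) For all $i$, $t$, $(i,j)\in\mathcal{E}$ and all arguments, $\mathbb{E}\|\nabla_{\mathbf{x}^i}f^i(\mathbf{x}^i,\boldsymbol{\theta}^i_t)\|^2\le\sigma_f^2$ and $\mathbb{E}\|\nabla_{\mathbf{x}^i}h^{ij}(\mathbf{x}^i,\mathbf{x}^j,\boldsymbol{\theta}^i_{[t]_i},\boldsymbol{\theta}^j_{[t]_j})\|^2\le\sigma_h^2$. (A4) $\max_{\mathbf{x}^i,\mathbf{x}^j\in\mathcal{X}}\mathbb{E}[h^{ij}(\mathbf{x}^i,\mathbf{x}^j,\boldsymbol{\theta}^i_t,\boldsymbol{\theta}^j_t)^2]\le\sigma_\lambda^2$ for all $(i,j)\in\mathcal{E}$, $t$. (A5) $|F(\mathbf{x})-F(\mathbf{y})|\le L_f\|\mathbf{x}-\mathbf{y}\|$.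 (A6) $\tau_i(t)\le\tau<\infty$ for all $i,t$. *)

theory Defs
  imports "HOL-Analysis.Analysis"
begin

text \<open>Nodes are the elements of a finite type 'n (N = CARD('n)); a primal point is
  x :: 'a ^ 'n whose i-th block x$i lives in X, a subset of the Euclidean space 'a (= R^p).
  Multipliers are functions on node pairs; only their values on the edge set E matter
  (they represent vectors in R^M, M = card E).\<close>

definition XN :: "'a set \<Rightarrow> ('a ^ 'n) set" where
  "XN X = {x. \<forall>i. x $ i \<in> X}"

definition projXN :: "'a::euclidean_space set \<Rightarrow> 'a ^ 'n::finite \<Rightarrow> 'a ^ 'n" where
  "projXN X v = closest_point (XN X) v"

definition lnormsq :: "('n \<times> 'n) set \<Rightarrow> ('n \<times> 'n \<Rightarrow> real) \<Rightarrow> real" where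
  "lnormsq E l = (\<Sum>e\<in>E. (l e)\<^sup>2)"

definition dl :: "('n \<Rightarrow> nat \<Rightarrow> nat) \<Rightarrow> 'n \<Rightarrow> nat \<Rightarrow> nat" where
  "dl \<tau> i t = t - \<tau> i t"

definition xdel :: "('n \<Rightarrow> nat \<Rightarrow> nat) \<Rightarrow> (nat \<Rightarrow> 'a ^ 'n::finite) \<Rightarrow> nat \<Rightarrow> 'a ^ 'n" where
  "xdel \<tau> xs t = (\<chi> i. xs (dl \<tau> i t) $ i)"

definition Lhat ::
  "('n::finite \<Rightarrow> 'a \<Rightarrow> 'th \<Rightarrow> real) \<Rightarrow> ('n \<Rightarrow> 'n \<Rightarrow> 'a \<Rightarrow> 'a \<Rightarrow> 'th \<Rightarrow> 'th \<Rightarrow> real)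
   \<Rightarrow> ('n \<times> 'n \<Rightarrow> real) \<Rightarrow> ('n \<times> 'n) set \<Rightarrow> real \<Rightarrow> real
   \<Rightarrow> ('n \<Rightarrow> nat \<Rightarrow> 'th) \<Rightarrow> ('n \<Rightarrow> nat \<Rightarrow> nat) \<Rightarrow> nat
   \<Rightarrow> 'a ^ 'n \<Rightarrow> ('n \<times> 'n \<Rightarrow> real) \<Rightarrow> real" where
  "Lhat f h \<gamma> E \<delta> \<epsilon> \<theta> \<tau> t x l =
     (\<Sum>i\<in>UNIV. f i (x $ i) (\<theta> i (dl \<tau> i t))
        + (\<Sum>j\<in>{j. (i, j) \<in> E}.
             l (i, j) * (h i j (x $ i) (x $ j) (\<theta> i (dl \<tau> i t)) (\<theta> j (dl \<tau> j t)) - \<gamma> (i, j))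
             - \<delta> * \<epsilon> / 2 * (l (i, j))\<^sup>2))"

text \<open>Partial gradient of Lhat w.r.t. x, written out: gf i u th is the gradient of f i at u,
  gh1 i j u v th th' / gh2 i j u v th th' are the gradients of h i j w.r.t. its first / second
  argument.\<close>
definition gradx ::
  "('n::finite \<Rightarrow> 'a::real_inner \<Rightarrow> 'th \<Rightarrow> 'a)
   \<Rightarrow> ('n \<Rightarrow> 'n \<Rightarrow> 'a \<Rightarrow> 'a \<Rightarrow> 'th \<Rightarrow> 'th \<Rightarrow> 'a) \<Rightarrow> ('n \<Rightarrow> 'n \<Rightarrow> 'a \<Rightarrow> 'a \<Rightarrow> 'th \<Rightarrow> 'th \<Rightarrow> 'a)
   \<Rightarrow> ('n \<times> 'n) set \<Rightarrow> ('n \<Rightarrow> nat \<Rightarrow> 'th) \<Rightarrow> ('n \<Rightarrow> nat \<Rightarrow> nat) \<Rightarrow> nat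
   \<Rightarrow> 'a ^ 'n \<Rightarrow> ('n \<times> 'n \<Rightarrow> real) \<Rightarrow> 'a ^ 'n" where
  "gradx gf gh1 gh2 E \<theta> \<tau> t x l =
     (\<chi> k. gf k (x $ k) (\<theta> k (dl \<tau> k t))
        + (\<Sum>j\<in>{j. (k, j) \<in> E}.
             l (k, j) *\<^sub>R gh1 k j (x $ k) (x $ j) (\<theta> k (dl \<tau> k t)) (\<theta> j (dl \<tau> j t)))
        + (\<Sum>i\<in>{i. (i, k) \<in> E}.
             l (i, k) *\<^sub>R gh2 i k (x $ i) (x $ k) (\<theta> i (dl \<tau> i t)) (\<theta> k (dl \<tau> k t))))"

definition gradl ::
  "('n \<Rightarrow> 'n \<Rightarrow> 'a \<Rightarrow> 'a \<Rightarrow> 'th \<Rightarrow> 'th \<Rightarrow> real) \<Rightarrow> ('n \<times> 'n \<Rightarrow> real) \<Rightarrow> ('n \<times> 'n) set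
   \<Rightarrow> real \<Rightarrow> real \<Rightarrow> ('n \<Rightarrow> nat \<Rightarrow> 'th) \<Rightarrow> ('n \<Rightarrow> nat \<Rightarrow> nat) \<Rightarrow> nat
   \<Rightarrow> 'a ^ 'n::finite \<Rightarrow> ('n \<times> 'n \<Rightarrow> real) \<Rightarrow> ('n \<times> 'n \<Rightarrow> real)" where
  "gradl h \<gamma> E \<delta> \<epsilon> \<theta> \<tau> t x l =
     (\<lambda>(i, j). if (i, j) \<in> E then
        h i j (x $ i) (x $ j) (\<theta> i (dl \<tau> i t)) (\<theta> j (dl \<tau> j t)) - \<gamma> (i, j) - \<delta> * \<epsilon> * l (i, j)
      else 0)"

definition sym_connected :: "('n \<times> 'n) set \<Rightarrow> bool" where
  "sym_connected E \<longleftrightarrow> sym E \<and> (\<forall>i j. (i, j) \<in> E\<^sup>*)"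

end

theory Submission
  imports Defs
begin

text \<open>Both updates are projected gradient steps (onto \<open>X^N\<close>, resp. the nonnegative orthant), and
  projections are nonexpansive, so each step bounds the inner product of its gradient with the
  distance to any comparison point by a telescoping difference of squared distances plus
  \<open>\<epsilon>/2\<close> times the squared gradient.  Convexity of the Lagrangian in \<open>x\<close> (first-order condition)
  and concavity in \<open>\<lambda>\<close> bound the Lagrangian gap by these two inner products, except that the
  primal gradient is taken at the delayed point \<open>x_[t]\<close> rather than at \<open>x_t\<close>; the mismatch is
  the last term of the bound.\<close>

lemma convex_on_above_derivative:
  fixes f :: "'v::real_normed_vector \<Rightarrow> real"
  assumes cv: "convex_on S f" and S: "convex S" and u: "u \<in> S" and v: "v \<in> S"
    and d: "(f has_derivative D) (at u within S)"
  shows "f u + D (v - u) \<le> f v"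
proof -
  define p where "p = (\<lambda>s::real. u + s *\<^sub>R (v - u))"
  have p0: "p 0 = u" by (simp add: p_def)
  have pS: "p ` {0..1} \<subseteq> S"
  proof
    fix y assume "y \<in> p ` {0..1}"
    then obtain s where "s \<in> {0..1}" "y = (1 - s) *\<^sub>R u + s *\<^sub>R v"
      by (auto simp: p_def algebra_simps)
    then show "y \<in> S" using S u v by (auto simp: convex_alt)
  qed
  have dp: "(p has_derivative (\<lambda>s. s *\<^sub>R (v - u))) (at 0 within {0..1})"
    unfolding p_def by (auto intro!: derivative_eq_intros)
  have "(f has_derivative D) (at (p 0) within p ` {0..1})"
    using has_derivative_subset[OF d pS] p0 by simp
  then have "((\<lambda>s. f (p s)) has_derivative (\<lambda>s. D (s *\<^sub>R (v - u)))) (at 0 within {0..1})"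
    by (rule has_derivative_in_compose[OF dp])
  moreover have "(\<lambda>s. D (s *\<^sub>R (v - u))) = (*) (D (v - u))"
    using linear_cmul[OF bounded_linear.linear[OF has_derivative_bounded_linear[OF d]]]
    by (auto simp: fun_eq_iff)
  ultimately have "((\<lambda>s. f (p s)) has_field_derivative D (v - u)) (at 0 within {0..1})"
    unfolding has_field_derivative_def by simp
  then have lim: "((\<lambda>s. (f (p s) - f (p 0)) / (s - 0)) \<longlongrightarrow> D (v - u)) (at 0 within {0..1})"
    by (simp add: has_field_derivative_iff)
  \<comment> \<open>convexity along the segment bounds every difference quotient by \<open>f v - f u\<close>\<close>
  have ev: "eventually (\<lambda>s. (f (p s) - f (p 0)) / (s - 0) \<le> f v - f u) (at 0 within {0..1})"
    unfolding eventually_at_filter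
  proof (rule always_eventually, intro allI impI)
    fix s :: real assume "s \<noteq> 0" "s \<in> {0..1}"
    then have s: "0 < s" "s \<le> 1" by auto
    have "f (p s) = f ((1 - s) *\<^sub>R u + s *\<^sub>R v)" by (simp add: p_def algebra_simps)
    also have "\<dots> \<le> (1 - s) * f u + s * f v" using convex_onD[OF cv, of s u v] s u v by simp
    finally have "f (p s) - f u \<le> s * (f v - f u)" by (simp add: algebra_simps)
    then show "(f (p s) - f (p 0)) / (s - 0) \<le> f v - f u"
      using s p0 by (simp add: divide_le_eq mult.commute)
  qed
  have "{0..1::real} - {0} = {0<..1}" by auto
  then have "at (0::real) within {0..1} \<noteq> bot" by (simp add: at_within_eq_bot_iff)
  then have "D (v - u) \<le> f v - f u" by (rule tendsto_le[OF _ tendsto_const lim ev])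
  then show ?thesis by simp
qed

lemma closest_point_step_bound:
  fixes S :: "'v::euclidean_space set"
  assumes S: "convex S" "closed S" "S \<noteq> {}" and x: "x \<in> S" and \<epsilon>: "\<epsilon> > 0"
  shows "inner g (z - x)
    \<le> ((norm (z - x))\<^sup>2 - (norm (closest_point S (z - \<epsilon> *\<^sub>R g) - x))\<^sup>2) / (2 * \<epsilon>)
      + \<epsilon> / 2 * (norm g)\<^sup>2"
proof -
  have "dist (closest_point S (z - \<epsilon> *\<^sub>R g)) (closest_point S x) \<le> dist (z - \<epsilon> *\<^sub>R g) x"
    using S by (rule closest_point_lipschitz)
  then have "(norm (closest_point S (z - \<epsilon> *\<^sub>R g) - x))\<^sup>2 \<le> (norm ((z - x) - \<epsilon> *\<^sub>R g))\<^sup>2"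
    using closest_point_self[OF x] by (simp add: dist_norm algebra_simps power_mono)
  also have "\<dots> = (norm (z - x))\<^sup>2 - 2 * \<epsilon> * inner g (z - x) + \<epsilon>\<^sup>2 * (norm g)\<^sup>2"
    unfolding power2_norm_eq_inner
    by (simp add: inner_diff_right inner_commute power2_eq_square algebra_simps)
  finally show ?thesis using \<epsilon> by (simp add: field_simps power2_eq_square)
qed

lemma max_zero_diff_square_le:
  fixes a b :: real
  assumes "b \<ge> 0"
  shows "(max 0 a - b)\<^sup>2 \<le> (a - b)\<^sup>2"
proof (cases "a \<ge> 0")
  case False
  have "0 \<le> a * (a - 2 * b)" using False assms by (intro mult_nonpos_nonpos) auto
  with False show ?thesis by (simp add: power2_eq_square algebra_simps)
qed simp

lemma max_zero_step_bound:
  fixes a b g \<epsilon> :: real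
  assumes "b \<ge> 0" "\<epsilon> > 0"
  shows "g * (b - a) \<le> ((a - b)\<^sup>2 - (max 0 (a + \<epsilon> * g) - b)\<^sup>2) / (2 * \<epsilon>) + \<epsilon> / 2 * g\<^sup>2"
proof -
  have "(max 0 (a + \<epsilon> * g) - b)\<^sup>2 \<le> (a + \<epsilon> * g - b)\<^sup>2"
    using assms(1) by (rule max_zero_diff_square_le)
  also have "\<dots> = (a - b)\<^sup>2 - 2 * \<epsilon> * (g * (b - a)) + \<epsilon>\<^sup>2 * g\<^sup>2"
    by (simp add: power2_eq_square algebra_simps)
  finally show ?thesis using assms(2) by (simp add: field_simps power2_eq_square)
qed

lemma sum_edges_by_source:
  fixes E :: "('n::finite \<times> 'n) set"
  shows "(\<Sum>i\<in>UNIV. \<Sum>j\<in>{j. (i, j) \<in> E}. b (i, j)) = (\<Sum>e\<in>E. b e)"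
proof -
  have "Sigma UNIV (\<lambda>i. {j. (i, j) \<in> E}) = E" by auto
  then show ?thesis by (simp add: sum.Sigma)
qed

lemma sum_edges_by_target:
  fixes E :: "('n::finite \<times> 'n) set"
  shows "(\<Sum>k\<in>UNIV. \<Sum>i\<in>{i. (i, k) \<in> E}. b (i, k)) = (\<Sum>e\<in>E. b e)"
proof -
  have "(\<Sum>k\<in>UNIV. \<Sum>i\<in>{i. (i, k) \<in> E}. b (i, k))
      = (\<Sum>p\<in>Sigma UNIV (\<lambda>k. {i. (i, k) \<in> E}). b (snd p, fst p))"
    by (simp add: sum.Sigma split_def)
  also have "Sigma UNIV (\<lambda>k. {i. (i, k) \<in> E}) = prod.swap ` E" by force
  also have "(\<Sum>p\<in>prod.swap ` E. b (snd p, fst p)) = (\<Sum>e\<in>E. b e)"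
    by (subst sum.reindex) (auto simp: inj_on_def)
  finally show ?thesis .
qed

lemma closed_XN: "closed X \<Longrightarrow> closed (XN X :: ('a::real_normed_vector ^ 'n::finite) set)"
  unfolding XN_def by (rule closed_vector_box) simp

lemma convex_XN: "convex X \<Longrightarrow> convex (XN X :: ('a::real_vector ^ 'n) set)"
  unfolding convex_def XN_def by auto

lemma Lhat_edge_sum:
  "Lhat f h \<gamma> E \<delta> \<epsilon> \<theta> \<tau> t z lam = (\<Sum>i\<in>UNIV. f i (z $ i) (\<theta> i (dl \<tau> i t)))
    + (\<Sum>e\<in>E. lam e * (h (fst e) (snd e) (z $ fst e) (z $ snd e)
                           (\<theta> (fst e) (dl \<tau> (fst e) t)) (\<theta> (snd e) (dl \<tau> (snd e) t)) - \<gamma> e)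
              - \<delta> * \<epsilon> / 2 * (lam e)\<^sup>2)"
  unfolding Lhat_def sum.distrib
  using sum_edges_by_source[of "\<lambda>e. lam e * (h (fst e) (snd e) (z $ fst e) (z $ snd e)
      (\<theta> (fst e) (dl \<tau> (fst e) t)) (\<theta> (snd e) (dl \<tau> (snd e) t)) - \<gamma> e) - \<delta> * \<epsilon> / 2 * (lam e)\<^sup>2" E]
  by simp

lemma inner_gradx_edge_sum:
  fixes E :: "('n::finite \<times> 'n) set" and \<theta> :: "'n \<Rightarrow> nat \<Rightarrow> 'th"
    and \<tau> :: "'n \<Rightarrow> nat \<Rightarrow> nat" and t :: nat
  defines "th \<equiv> \<lambda>i. \<theta> i (dl \<tau> i t)"
  shows "inner (gradx gf gh1 gh2 E \<theta> \<tau> t z lam) w =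
     (\<Sum>k\<in>UNIV. inner (gf k (z $ k) (th k)) (w $ k))
   + (\<Sum>e\<in>E. lam e * (inner (gh1 (fst e) (snd e) (z $ fst e) (z $ snd e) (th (fst e)) (th (snd e))) (w $ fst e)
                     + inner (gh2 (fst e) (snd e) (z $ fst e) (z $ snd e) (th (fst e)) (th (snd e))) (w $ snd e)))"
proof -
  let ?a = "\<lambda>e. lam e * inner (gh1 (fst e) (snd e) (z $ fst e) (z $ snd e) (th (fst e)) (th (snd e))) (w $ fst e)"
  let ?b = "\<lambda>e. lam e * inner (gh2 (fst e) (snd e) (z $ fst e) (z $ snd e) (th (fst e)) (th (snd e))) (w $ snd e)"
  have "inner (gradx gf gh1 gh2 E \<theta> \<tau> t z lam) w =
     (\<Sum>k\<in>UNIV. inner (gf k (z $ k) (th k)) (w $ k))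
   + (\<Sum>k\<in>UNIV. \<Sum>j\<in>{j. (k, j) \<in> E}. ?a (k, j)) + (\<Sum>k\<in>UNIV. \<Sum>i\<in>{i. (i, k) \<in> E}. ?b (i, k))"
    unfolding gradx_def inner_vec_def th_def
    by (simp add: inner_add_left inner_sum_left sum.distrib)
  also have "\<dots> = (\<Sum>k\<in>UNIV. inner (gf k (z $ k) (th k)) (w $ k)) + (\<Sum>e\<in>E. ?a e) + (\<Sum>e\<in>E. ?b e)"
    using sum_edges_by_source[of ?a E] sum_edges_by_target[of ?b E] by simp
  finally show ?thesis by (simp add: sum.distrib distrib_left add.assoc)
qed

lemma Lhat_diff_le_inner_gradx:
  fixes X :: "'a::euclidean_space set" and E :: "('n::finite \<times> 'n) set"
  assumes X: "convex X"
    and data: "\<forall>i s. \<theta> i s \<in> \<Theta> i"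
    and f_convex: "\<forall>i. \<forall>th\<in>\<Theta> i. convex_on X (\<lambda>u. f i u th)"
    and f_grad: "\<forall>i. \<forall>th\<in>\<Theta> i. \<forall>u\<in>X.
                   ((\<lambda>u. f i u th) has_derivative (\<lambda>v. inner (gf i u th) v)) (at u within X)"
    and h_convex: "\<forall>(i, j)\<in>E. \<forall>th\<in>\<Theta> i. \<forall>th'\<in>\<Theta> j.
                   convex_on (X \<times> X) (\<lambda>z. h i j (fst z) (snd z) th th')"
    and h_grad: "\<forall>(i, j)\<in>E. \<forall>th\<in>\<Theta> i. \<forall>th'\<in>\<Theta> j. \<forall>z\<in>X \<times> X.
                   ((\<lambda>z. h i j (fst z) (snd z) th th') has_derivative
                     (\<lambda>w. inner (gh1 i j (fst z) (snd z) th th') (fst w)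
                          + inner (gh2 i j (fst z) (snd z) th th') (snd w))) (at z within X \<times> X)"
    and y: "y \<in> XN X" and x: "x \<in> XN X" and lam: "\<forall>e\<in>E. lam e \<ge> 0"
  shows "Lhat f h \<gamma> E \<delta> \<epsilon> \<theta> \<tau> t y lam - Lhat f h \<gamma> E \<delta> \<epsilon> \<theta> \<tau> t x lam
    \<le> inner (gradx gf gh1 gh2 E \<theta> \<tau> t y lam) (y - x)"
proof -
  define th where "th = (\<lambda>i. \<theta> i (dl \<tau> i t))"
  define H where "H = (\<lambda>(z::'a ^ 'n) (i, j). h i j (z $ i) (z $ j) (th i) (th j))"
  define G where "G = (\<lambda>(i, j). inner (gh1 i j (y $ i) (y $ j) (th i) (th j)) ((y - x) $ i)
                               + inner (gh2 i j (y $ i) (y $ j) (th i) (th j)) ((y - x) $ j))"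
  have yi: "y $ i \<in> X" and xi: "x $ i \<in> X" for i using x y by (simp_all add: XN_def)
  have th: "th i \<in> \<Theta> i" for i using data by (simp add: th_def)
  have node: "f i (y $ i) (th i) - f i (x $ i) (th i) \<le> inner (gf i (y $ i) (th i)) ((y - x) $ i)" for i
  proof -
    have "f i (y $ i) (th i) + inner (gf i (y $ i) (th i)) (x $ i - y $ i) \<le> f i (x $ i) (th i)"
      using convex_on_above_derivative[of X "\<lambda>u. f i u (th i)" "y $ i" "x $ i"] f_convex f_grad th X yi xi
      by blast
    then show ?thesis by (simp add: inner_diff_right)
  qed
  have edge: "lam e * (H y e - H x e) \<le> lam e * G e" if e: "e \<in> E" for e
  proof -
    obtain i j where ij: "e = (i, j)" by (cases e)
    have cv: "convex_on (X \<times> X) (\<lambda>z. h i j (fst z) (snd z) (th i) (th j))"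
      using h_convex e ij th by auto
    have dv: "((\<lambda>z. h i j (fst z) (snd z) (th i) (th j)) has_derivative
                (\<lambda>w. inner (gh1 i j (y $ i) (y $ j) (th i) (th j)) (fst w)
                     + inner (gh2 i j (y $ i) (y $ j) (th i) (th j)) (snd w))) (at (y $ i, y $ j) within X \<times> X)"
      using h_grad e ij th yi by fastforce
    have "h i j (y $ i) (y $ j) (th i) (th j)
          + (inner (gh1 i j (y $ i) (y $ j) (th i) (th j)) (x $ i - y $ i)
             + inner (gh2 i j (y $ i) (y $ j) (th i) (th j)) (x $ j - y $ j))
        \<le> h i j (x $ i) (x $ j) (th i) (th j)"
      using convex_on_above_derivative[OF cv convex_Times[OF X X] _ _ dv, of "(x $ i, x $ j)"] yi xi
      by simp
    then have "H y e - H x e \<le> G e" by (simp add: H_def G_def ij inner_diff_right)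
    then show ?thesis using lam e by (simp add: mult_left_mono)
  qed
  have "Lhat f h \<gamma> E \<delta> \<epsilon> \<theta> \<tau> t y lam - Lhat f h \<gamma> E \<delta> \<epsilon> \<theta> \<tau> t x lam
     = (\<Sum>i\<in>UNIV. f i (y $ i) (th i) - f i (x $ i) (th i)) + (\<Sum>e\<in>E. lam e * (H y e - H x e))"
    unfolding Lhat_edge_sum H_def th_def by (simp add: sum_subtractf split_def algebra_simps)
  also have "\<dots> \<le> (\<Sum>i\<in>UNIV. inner (gf i (y $ i) (th i)) ((y - x) $ i)) + (\<Sum>e\<in>E. lam e * G e)"
    by (intro add_mono sum_mono node edge)
  also have "\<dots> = inner (gradx gf gh1 gh2 E \<theta> \<tau> t y lam) (y - x)"
    unfolding inner_gradx_edge_sum G_def th_def by (simp add: split_def)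
  finally show ?thesis .
qed

lemma Lhat_diff_le_gradl_sum:
  assumes "\<delta> * \<epsilon> \<ge> 0"
  shows "Lhat f h \<gamma> E \<delta> \<epsilon> \<theta> \<tau> t y l - Lhat f h \<gamma> E \<delta> \<epsilon> \<theta> \<tau> t y lam
    \<le> (\<Sum>e\<in>E. gradl h \<gamma> E \<delta> \<epsilon> \<theta> \<tau> t y lam e * (l e - lam e))"
proof -
  define c where "c = (\<lambda>(i, j). h i j (y $ i) (y $ j) (\<theta> i (dl \<tau> i t)) (\<theta> j (dl \<tau> j t)) - \<gamma> (i, j))"
  have gradl: "gradl h \<gamma> E \<delta> \<epsilon> \<theta> \<tau> t y lam e = c e - \<delta> * \<epsilon> * lam e" if "e \<in> E" for e
    using that by (cases e) (simp add: gradl_def c_def)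
  have "Lhat f h \<gamma> E \<delta> \<epsilon> \<theta> \<tau> t y l - Lhat f h \<gamma> E \<delta> \<epsilon> \<theta> \<tau> t y lam
     = (\<Sum>e\<in>E. (l e * c e - \<delta> * \<epsilon> / 2 * (l e)\<^sup>2) - (lam e * c e - \<delta> * \<epsilon> / 2 * (lam e)\<^sup>2))"
    unfolding Lhat_edge_sum c_def by (simp add: sum_subtractf split_def)
  also have "\<dots> \<le> (\<Sum>e\<in>E. gradl h \<gamma> E \<delta> \<epsilon> \<theta> \<tau> t y lam e * (l e - lam e))"
  proof (rule sum_mono)
    fix e assume "e \<in> E"
    have "0 \<le> \<delta> * \<epsilon> / 2 * (l e - lam e)\<^sup>2" using assms by simp
    then show "(l e * c e - \<delta> * \<epsilon> / 2 * (l e)\<^sup>2) - (lam e * c e - \<delta> * \<epsilon> / 2 * (lam e)\<^sup>2)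
        \<le> gradl h \<gamma> E \<delta> \<epsilon> \<theta> \<tau> t y lam e * (l e - lam e)"
      unfolding gradl[OF \<open>e \<in> E\<close>] by (simp add: power2_eq_square algebra_simps)
  qed
  finally show ?thesis .
qed

lemma dual_step_bound:
  assumes \<epsilon>: "\<epsilon> > 0" and l: "\<forall>e\<in>E. l e \<ge> 0"
    and step: "\<forall>e\<in>E. lam' e = max 0 (lam e + \<epsilon> * g e)"
  shows "(\<Sum>e\<in>E. g e * (l e - lam e))
    \<le> (lnormsq E (\<lambda>e. lam e - l e) - lnormsq E (\<lambda>e. lam' e - l e)) / (2 * \<epsilon>) + \<epsilon> / 2 * lnormsq E g"
proof -
  have "(\<Sum>e\<in>E. g e * (l e - lam e))
      \<le> (\<Sum>e\<in>E. ((lam e - l e)\<^sup>2 - (lam' e - l e)\<^sup>2) / (2 * \<epsilon>) + \<epsilon> / 2 * (g e)\<^sup>2)"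
    using max_zero_step_bound \<epsilon> l step by (intro sum_mono) simp
  also have "\<dots> = (lnormsq E (\<lambda>e. lam e - l e) - lnormsq E (\<lambda>e. lam' e - l e)) / (2 * \<epsilon>)
                  + \<epsilon> / 2 * lnormsq E g"
    by (simp add: lnormsq_def sum.distrib sum_distrib_left sum_subtractf flip: sum_divide_distrib)
  finally show ?thesis .
qed

lemma primal_iterates_in_XN:
  fixes xs :: "nat \<Rightarrow> 'a::euclidean_space ^ 'n::finite"
  assumes X: "closed X" and init: "xs 1 \<in> XN X"
    and proj: "\<forall>s\<ge>1. xs (Suc s) = projXN X (d s)" and s: "s \<ge> 1"
  shows "xs s \<in> XN X"
  using s
proof (induction s rule: dec_induct)
  case (step s)
  have "XN X \<noteq> ({} :: ('a ^ 'n) set)" using init by auto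
  then show ?case
    using closest_point_in_set[OF closed_XN[OF X]] proj \<open>s \<ge> 1\<close> by (simp add: projXN_def)
qed (rule init)

lemma dual_iterates_nonneg:
  fixes ls :: "nat \<Rightarrow> 'e \<Rightarrow> real"
  assumes init: "\<forall>e\<in>E. ls 1 e = 0"
    and step: "\<forall>s\<ge>1. \<forall>e\<in>E. ls (Suc s) e = max 0 (d s e)" and s: "s \<ge> 1" and e: "e \<in> E"
  shows "ls s e \<ge> 0"
  using s by (induction s rule: dec_induct) (use init step e in auto)

theorem lemma1:
  fixes X :: "'a::euclidean_space set"
    and E :: "('n::finite \<times> 'n) set"
    and \<Theta> :: "'n \<Rightarrow> 'th set"
    and f :: "'n \<Rightarrow> 'a \<Rightarrow> 'th \<Rightarrow> real" and gf :: "'n \<Rightarrow> 'a \<Rightarrow> 'th \<Rightarrow> 'a"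
    and h :: "'n \<Rightarrow> 'n \<Rightarrow> 'a \<Rightarrow> 'a \<Rightarrow> 'th \<Rightarrow> 'th \<Rightarrow> real"
    and gh1 gh2 :: "'n \<Rightarrow> 'n \<Rightarrow> 'a \<Rightarrow> 'a \<Rightarrow> 'th \<Rightarrow> 'th \<Rightarrow> 'a"
    and \<gamma> :: "'n \<times> 'n \<Rightarrow> real"
    and \<theta> :: "'n \<Rightarrow> nat \<Rightarrow> 'th"
    and \<tau> :: "'n \<Rightarrow> nat \<Rightarrow> nat"
    and \<epsilon> \<delta> :: real
    and xs :: "nat \<Rightarrow> 'a ^ 'n"
    and ls :: "nat \<Rightarrow> ('n \<times> 'n \<Rightarrow> real)"
    and t :: nat and x :: "'a ^ 'n" and l :: "'n \<times> 'n \<Rightarrow> real"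
  assumes X: "X \<noteq> {}" "compact X" "convex X"
    and A1: "sym_connected E"
    and gamma: "\<forall>e\<in>E. \<gamma> e \<ge> 0"
    and data: "\<forall>i s. \<theta> i s \<in> \<Theta> i"
    and f_convex: "\<forall>i. \<forall>th\<in>\<Theta> i. convex_on X (\<lambda>u. f i u th)"
    and f_grad: "\<forall>i. \<forall>th\<in>\<Theta> i. \<forall>u\<in>X.
                   ((\<lambda>u. f i u th) has_derivative (\<lambda>v. inner (gf i u th) v)) (at u within X)"
    and h_convex: "\<forall>(i, j)\<in>E. \<forall>th\<in>\<Theta> i. \<forall>th'\<in>\<Theta> j.
                   convex_on (X \<times> X) (\<lambda>z. h i j (fst z) (snd z) th th')"
    and h_grad: "\<forall>(i, j)\<in>E. \<forall>th\<in>\<Theta> i. \<forall>th'\<in>\<Theta> j. \<forall>z\<in>X \<times> X.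
                   ((\<lambda>z. h i j (fst z) (snd z) th th') has_derivative
                     (\<lambda>w. inner (gh1 i j (fst z) (snd z) th th') (fst w)
                          + inner (gh2 i j (fst z) (snd z) th th') (snd w))) (at z within X \<times> X)"
    and delay1: "\<forall>i s. s \<ge> 1 \<longrightarrow> s - \<tau> i s \<ge> 1"
    and delay2: "\<forall>i s. s \<ge> 2 \<longrightarrow> \<tau> i s \<le> \<tau> i (s - 1) + 1"
    and A6: "\<exists>\<tau>max. \<forall>i s. \<tau> i s \<le> \<tau>max"
    and eps: "\<epsilon> > 0" and del: "\<delta> > 0"
    and init_x: "xs 1 \<in> XN X"
    and init_l: "\<forall>e\<in>E. ls 1 e = 0"
    and step_x: "\<forall>s\<ge>1. xs (Suc s) =
        projXN X (xs s - \<epsilon> *\<^sub>R gradx gf gh1 gh2 E \<theta> \<tau> s (xdel \<tau> xs s) (ls s))"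
    and step_l: "\<forall>s\<ge>1. \<forall>e\<in>E. ls (Suc s) e =
        max 0 (ls s e + \<epsilon> * gradl h \<gamma> E \<delta> \<epsilon> \<theta> \<tau> s (xdel \<tau> xs s) (ls s) e)"
    and t: "t \<ge> 1"
    and x: "x \<in> XN X"
    and l: "\<forall>e\<in>E. l e \<ge> 0"
  shows "Lhat f h \<gamma> E \<delta> \<epsilon> \<theta> \<tau> t (xdel \<tau> xs t) l - Lhat f h \<gamma> E \<delta> \<epsilon> \<theta> \<tau> t x (ls t)
    \<le> 1 / (2 * \<epsilon>) * ((norm (xs t - x))\<^sup>2 - (norm (xs (Suc t) - x))\<^sup>2
                       + lnormsq E (\<lambda>e. ls t e - l e) - lnormsq E (\<lambda>e. ls (Suc t) e - l e))
      + \<epsilon> / 2 * (lnormsq E (gradl h \<gamma> E \<delta> \<epsilon> \<theta> \<tau> t (xdel \<tau> xs t) (ls t))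
                 + (norm (gradx gf gh1 gh2 E \<theta> \<tau> t (xdel \<tau> xs t) (ls t)))\<^sup>2)
      + inner (gradx gf gh1 gh2 E \<theta> \<tau> t (xdel \<tau> xs t) (ls t)) (xdel \<tau> xs t - xs t)"
proof -
  define y where "y = xdel \<tau> xs t"
  define g where "g = gradx gf gh1 gh2 E \<theta> \<tau> t y (ls t)"
  define gl where "gl = gradl h \<gamma> E \<delta> \<epsilon> \<theta> \<tau> t y (ls t)"
  have cX: "closed X" using X(2) by (rule compact_imp_closed)
  have "\<forall>s\<ge>1. xs s \<in> XN X" using primal_iterates_in_XN[OF cX init_x step_x] by blast
  then have y: "y \<in> XN X" using delay1 t by (auto simp: y_def XN_def xdel_def dl_def)
  have ls_nonneg: "\<forall>e\<in>E. ls t e \<ge> 0" using dual_iterates_nonneg[OF init_l step_l t] by blast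
  have concave: "Lhat f h \<gamma> E \<delta> \<epsilon> \<theta> \<tau> t y l - Lhat f h \<gamma> E \<delta> \<epsilon> \<theta> \<tau> t y (ls t)
      \<le> (\<Sum>e\<in>E. gl e * (l e - ls t e))"
    unfolding gl_def using del eps by (intro Lhat_diff_le_gradl_sum) simp
  have convex: "Lhat f h \<gamma> E \<delta> \<epsilon> \<theta> \<tau> t y (ls t) - Lhat f h \<gamma> E \<delta> \<epsilon> \<theta> \<tau> t x (ls t) \<le> inner g (y - x)"
    unfolding g_def
    by (rule Lhat_diff_le_inner_gradx[OF X(3) data f_convex f_grad h_convex h_grad y x ls_nonneg])
  have primal: "inner g (xs t - x)
      \<le> ((norm (xs t - x))\<^sup>2 - (norm (xs (Suc t) - x))\<^sup>2) / (2 * \<epsilon>) + \<epsilon> / 2 * (norm g)\<^sup>2"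
    using closest_point_step_bound[OF convex_XN[OF X(3)] closed_XN[OF cX] _ x eps, of g "xs t"] step_x t x
    by (auto simp: projXN_def g_def y_def)
  have dual: "(\<Sum>e\<in>E. gl e * (l e - ls t e))
      \<le> (lnormsq E (\<lambda>e. ls t e - l e) - lnormsq E (\<lambda>e. ls (Suc t) e - l e)) / (2 * \<epsilon>)
        + \<epsilon> / 2 * lnormsq E gl"
    using step_l t by (intro dual_step_bound[OF eps l]) (simp add: gl_def y_def)
  have "inner g (y - x) = inner g (xs t - x) + inner g (y - xs t)"
    by (simp add: inner_diff_right)
  with concave convex primal dual show ?thesis
    unfolding y_def[symmetric] g_def[symmetric] gl_def[symmetric]
    by (simp add: add_divide_distrib diff_divide_distrib distrib_left right_diff_distrib)
qed

end
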